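(* The continuous density $f$ of the limiting Quicksort random variable $Y$ satisfies $f(x)>0$ for every $x\in\mathbb{R}$.
   Context: Let $g(u):=2u\ln u+2(1-u)\ln(1-u)+1$ for $u\in(0,1)$. The limiting Quicksort random variable $Y$ is the limit in distribution of $(X_n-\mathbf{E}X_n)/n$, where $X_n$ is the number of comparisons used by randomized Quicksort on $n$ distinct numbers; equivalently, its law is the unique law with $\mathbf{E}Y=0$ and finite variance satisfying $Y\overset{d}{=}UY+(1-U)Z+g(U)$, where on the right $U,Y,Z$ are independent, $Z\overset{d}{=}Y$ and $U$ is uniform on $(0,1)$. $Y$ has a continuous (indeed infinitely differentiable) density $f$. *)

theory Defs
  imports "HOL-Probability.Probability"
begin

definition qs_toll :: "real \<Rightarrow> real" where
  "qs_toll u = 2 * u * ln u + 2 * (1 - u) * ln (1 - u) + 1"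

definition unif01 :: "real measure" where
  "unif01 = uniform_measure lborel {0<..<1}"

definition quicksort_law :: "real measure \<Rightarrow> bool" where
  "quicksort_law \<mu> \<longleftrightarrow>
     prob_space \<mu> \<and> sets \<mu> = sets borel \<and>
     integrable \<mu> (\<lambda>x. x ^ 2) \<and>
     (\<integral>x. x \<partial>\<mu>) = 0 \<and>
     \<mu> = distr (unif01 \<Otimes>\<^sub>M (\<mu> \<Otimes>\<^sub>M \<mu>)) borel
            (\<lambda>(u, y, z). u * y + (1 - u) * z + qs_toll u)"

end

(*
  If f y > 0 and 0 < u < 1, then for (U, Y) near (u, y) and Z near y the right-hand side
  U Y + (1 - U) Z + g(U) of the fixed-point equation falls into (x - eps, x + eps), x = y + g(u),
  with probability at least c eps for a constant c > 0, by Fubini.  If f x were 0, continuity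
  would make the mass of that interval o(eps).  So positivity of f spreads from y to y + g(u).
  Since g(u) -> 1 as u -> 0 and g(1/2) = 1 - 2 ln 2 < 0, the values of g on (0,1) cover a
  neighbourhood of 0, and finitely many such steps reach any x from a point where f > 0.
*)
theory Submission
  imports Defs "HOL-Real_Asymp.Real_Asymp"
begin

lemma (in sigma_finite_measure) emeasure_pair_measure_ge:
  assumes A: "A \<in> sets (N \<Otimes>\<^sub>M M)" and U: "U \<in> sets N"
    and sections: "\<And>u. u \<in> U \<Longrightarrow> c \<le> emeasure M (Pair u -` A)"
  shows "c * emeasure N U \<le> emeasure (N \<Otimes>\<^sub>M M) A"
proof -
  have "c * emeasure N U = (\<integral>\<^sup>+u. c * indicator U u \<partial>N)"
    using U by (simp add: nn_integral_cmult_indicator)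
  also have "\<dots> \<le> (\<integral>\<^sup>+u. emeasure M (Pair u -` A) \<partial>N)"
    using sections by (intro nn_integral_mono) (auto split: split_indicator)
  also have "\<dots> = emeasure (N \<Otimes>\<^sub>M M) A"
    using A by (simp add: emeasure_pair_measure_alt)
  finally show ?thesis .
qed

lemma emeasure_density_lborel_ge:
  fixes f :: "real \<Rightarrow> real"
  assumes f: "f \<in> borel_measurable borel" and S: "S \<in> sets borel" "{a<..<b} \<subseteq> S"
    and "a \<le> b" "0 \<le> c" and lower: "\<And>x. x \<in> {a<..<b} \<Longrightarrow> c \<le> f x"
  shows "ennreal (c * (b - a)) \<le> emeasure (density lborel (\<lambda>x. ennreal (f x))) S"
proof -
  have "ennreal (c * (b - a)) = (\<integral>\<^sup>+x. ennreal c * indicator {a<..<b} x \<partial>lborel)"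
    using assms by (simp add: nn_integral_cmult_indicator ennreal_mult)
  also have "\<dots> \<le> (\<integral>\<^sup>+x. ennreal (f x) * indicator S x \<partial>lborel)"
    using lower S(2) by (intro nn_integral_mono) (auto split: split_indicator intro: ennreal_leI)
  also have "\<dots> = emeasure (density lborel (\<lambda>x. ennreal (f x))) S"
    using f S by (simp add: emeasure_density)
  finally show ?thesis .
qed

lemma emeasure_density_lborel_le:
  fixes f :: "real \<Rightarrow> real"
  assumes f: "f \<in> borel_measurable borel" and "a \<le> b" "0 \<le> C"
    and upper: "\<And>x. x \<in> {a<..<b} \<Longrightarrow> f x \<le> C"
  shows "emeasure (density lborel (\<lambda>x. ennreal (f x))) {a<..<b} \<le> ennreal (C * (b - a))"
proof -
  have "emeasure (density lborel (\<lambda>x. ennreal (f x))) {a<..<b}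
      = (\<integral>\<^sup>+x. ennreal (f x) * indicator {a<..<b} x \<partial>lborel)"
    using f by (simp add: emeasure_density)
  also have "\<dots> \<le> (\<integral>\<^sup>+x. ennreal C * indicator {a<..<b} x \<partial>lborel)"
    using upper by (intro nn_integral_mono) (auto split: split_indicator intro: ennreal_leI)
  also have "\<dots> = ennreal (C * (b - a))"
    using assms by (simp add: nn_integral_cmult_indicator ennreal_mult)
  finally show ?thesis .
qed

lemma isCont_half_lower_bound:
  fixes f :: "real \<Rightarrow> real"
  assumes "isCont f y" "0 < f y"
  obtains r where "0 < r" "\<And>z. \<bar>z - y\<bar> < r \<Longrightarrow> f y / 2 \<le> f z"
proof -
  have "\<forall>\<^sub>F z in nhds y. f y / 2 < f z"
    using assms by (intro order_tendstoD(1)[of f "f y"]) (auto simp: isCont_def tendsto_at_iff_tendsto_nhds)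
  then show ?thesis
    using that unfolding eventually_nhds_metric dist_real_def by (metis less_imp_le)
qed

lemma emeasure_density_lborel_near_zero:
  fixes f :: "real \<Rightarrow> real"
  assumes f: "f \<in> borel_measurable borel" and "isCont f x" "f x \<le> 0" "0 < c"
  obtains d where "0 < d"
    "\<And>\<epsilon>. 0 < \<epsilon> \<Longrightarrow> \<epsilon> \<le> d \<Longrightarrow>
       emeasure (density lborel (\<lambda>x. ennreal (f x))) {x - \<epsilon><..<x + \<epsilon>} \<le> ennreal (\<epsilon> * c)"
proof -
  have "\<forall>\<^sub>F t in nhds x. f t < c / 2"
    using assms(2-4) by (intro order_tendstoD(2)[of f "f x"]) (auto simp: isCont_def tendsto_at_iff_tendsto_nhds)
  then obtain d where "0 < d" and d: "\<And>t. dist t x < d \<Longrightarrow> f t < c / 2"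
    by (auto simp: eventually_nhds_metric)
  show ?thesis
  proof (rule that[OF \<open>0 < d\<close>])
    fix \<epsilon> :: real assume "0 < \<epsilon>" "\<epsilon> \<le> d"
    then have "emeasure (density lborel (\<lambda>x. ennreal (f x))) {x - \<epsilon><..<x + \<epsilon>}
        \<le> ennreal (c / 2 * ((x + \<epsilon>) - (x - \<epsilon>)))"
      using d \<open>0 < c\<close> by (intro emeasure_density_lborel_le[OF f]) (auto simp: dist_real_def less_imp_le)
    then show "emeasure (density lborel (\<lambda>x. ennreal (f x))) {x - \<epsilon><..<x + \<epsilon>} \<le> ennreal (\<epsilon> * c)"
      by (simp add: mult.commute)
  qed
qed

lemma prob_space_density_lborel_pos:
  fixes f :: "real \<Rightarrow> real"
  assumes "prob_space (density lborel (\<lambda>x. ennreal (f x)))"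
  obtains y where "0 < f y"
proof -
  have "\<exists>y. 0 < f y"
  proof (rule ccontr)
    assume "\<nexists>y. 0 < f y"
    then have "(\<lambda>x. ennreal (f x)) = (\<lambda>_. 0)"
      by (auto simp: fun_eq_iff ennreal_eq_0_iff not_less)
    then have "emeasure (density lborel (\<lambda>x. ennreal (f x))) UNIV = 0"
      by (simp add: emeasure_density)
    with prob_space.emeasure_space_1[OF assms] show False by simp
  qed
  with that show ?thesis by blast
qed

lemma real_reachable_by_bounded_steps:
  fixes P :: "real \<Rightarrow> bool"
  assumes "0 < m" "P y" and step: "\<And>y s. P y \<Longrightarrow> \<bar>s\<bar> \<le> m \<Longrightarrow> P (y + s)"
  shows "P x"
proof -
  define n where "n = nat \<lceil>\<bar>x - y\<bar> / m\<rceil> + 1"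
  define s where "s = (x - y) / n"
  have "0 < real n" by (simp add: n_def)
  have "\<bar>x - y\<bar> / m \<le> real n" by (simp add: n_def) linarith
  then have "\<bar>s\<bar> \<le> m"
    using \<open>0 < m\<close> \<open>0 < real n\<close> by (simp add: s_def field_simps)
  have "P (y + real k * s)" for k
  proof (induction k)
    case (Suc k)
    then show ?case
      using step[OF Suc \<open>\<bar>s\<bar> \<le> m\<close>] by (simp add: algebra_simps)
  qed (simp add: \<open>P y\<close>)
  from this[of n] show ?thesis
    using \<open>0 < real n\<close> by (simp add: s_def)
qed

lemma emeasure_unif01_interval:
  assumes "0 \<le> a" "a \<le> b" "b \<le> 1"
  shows "emeasure unif01 {a<..<b} = ennreal (b - a)"
proof -
  have "{0<..<(1::real)} \<inter> {a<..<b} = {a<..<b}" using assms by auto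
  then show ?thesis using assms by (simp add: unif01_def divide_ennreal_def)
qed

lemma qs_toll_covers_zero_neighbourhood:
  obtains m where "0 < m" "\<And>s. \<bar>s\<bar> \<le> m \<Longrightarrow> \<exists>u. 0 < u \<and> u < 1 \<and> qs_toll u = s"
proof -
  have "(qs_toll \<longlongrightarrow> 1) (at_right 0)"
    unfolding qs_toll_def by real_asymp
  then have "\<forall>\<^sub>F u in at_right 0. 1 / 2 < qs_toll u"
    by (rule order_tendstoD) simp
  then obtain e where "0 < e" and e: "\<And>u. 0 < u \<Longrightarrow> u < e \<Longrightarrow> 1 / 2 < qs_toll u"
    unfolding eventually_at_right_field by auto
  define u1 where "u1 = min (e / 2) (1 / 4)"
  have "0 < u1" "u1 < e" "u1 \<le> 1 / 2"
    using \<open>0 < e\<close> by (auto simp: u1_def)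
  then have "0 < qs_toll u1"
    using e[of u1] by simp
  have "qs_toll (1 / 2) = 1 - 2 * ln 2"
    unfolding qs_toll_def by (simp add: ln_div)
  then have "qs_toll (1 / 2) < 0"
    using ln2_ge_two_thirds by simp
  have cont: "continuous_on {u1..1 / 2} qs_toll"
    unfolding qs_toll_def using \<open>0 < u1\<close> by (intro continuous_intros) auto
  show ?thesis
  proof (rule that[of "min (- qs_toll (1 / 2)) (qs_toll u1)"])
    show "0 < min (- qs_toll (1 / 2)) (qs_toll u1)"
      using \<open>qs_toll (1 / 2) < 0\<close> \<open>0 < qs_toll u1\<close> by simp
    fix s :: real assume "\<bar>s\<bar> \<le> min (- qs_toll (1 / 2)) (qs_toll u1)"
    then have "qs_toll (1 / 2) \<le> s" "s \<le> qs_toll u1"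
      by (auto simp: abs_le_iff)
    then obtain u where "u1 \<le> u" "u \<le> 1 / 2" "qs_toll u = s"
      using IVT2'[of qs_toll "1 / 2" s u1, OF _ _ _ cont] \<open>u1 \<le> 1 / 2\<close> by blast
    then show "\<exists>u. 0 < u \<and> u < 1 \<and> qs_toll u = s"
      using \<open>0 < u1\<close> by (intro exI[of _ u]) auto
  qed
qed

definition qs_map :: "real \<times> real \<times> real \<Rightarrow> real" where
  "qs_map = (\<lambda>(u, y, z). u * y + (1 - u) * z + qs_toll u)"

lemma qs_map_measurable: "qs_map \<in> borel_measurable (borel \<Otimes>\<^sub>M (borel \<Otimes>\<^sub>M borel))"
  unfolding qs_map_def qs_toll_def by measurable

lemma quicksort_lawD:
  assumes "quicksort_law \<mu>"
  shows "prob_space \<mu>" "sets \<mu> = sets borel"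
    and "\<mu> = distr (unif01 \<Otimes>\<^sub>M (\<mu> \<Otimes>\<^sub>M \<mu>)) borel qs_map"
  using assms unfolding quicksort_law_def qs_map_def by auto

lemma quicksort_law_qs_map_measurable:
  assumes "quicksort_law \<mu>"
  shows "qs_map \<in> borel_measurable (unif01 \<Otimes>\<^sub>M (\<mu> \<Otimes>\<^sub>M \<mu>))"
    and "space (unif01 \<Otimes>\<^sub>M (\<mu> \<Otimes>\<^sub>M \<mu>)) = UNIV"
proof -
  have sets_M: "sets (unif01 \<Otimes>\<^sub>M (\<mu> \<Otimes>\<^sub>M \<mu>)) = sets (borel \<Otimes>\<^sub>M (borel \<Otimes>\<^sub>M borel))"
    using quicksort_lawD(2)[OF assms] by (intro sets_pair_measure_cong) (auto simp: unif01_def)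
  then show "space (unif01 \<Otimes>\<^sub>M (\<mu> \<Otimes>\<^sub>M \<mu>)) = UNIV"
    by (metis sets_eq_imp_space_eq space_borel space_pair_measure UNIV_Times_UNIV)
  show "qs_map \<in> borel_measurable (unif01 \<Otimes>\<^sub>M (\<mu> \<Otimes>\<^sub>M \<mu>))"
    using measurable_cong_sets[OF sets_M refl] qs_map_measurable by blast
qed

lemma quicksort_law_emeasure:
  assumes "quicksort_law \<mu>" and "B \<in> sets borel"
  shows "emeasure \<mu> B = emeasure (unif01 \<Otimes>\<^sub>M (\<mu> \<Otimes>\<^sub>M \<mu>)) (qs_map -` B)"
  using quicksort_lawD(3)[OF assms(1)] quicksort_law_qs_map_measurable[OF assms(1)] assms(2)
  by (metis emeasure_distr Int_UNIV_right)

lemma qs_map_near: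
  assumes "0 \<le> u" "u < 1" and z: "\<bar>z - (x - u * y - qs_toll u) / (1 - u)\<bar> < \<epsilon>"
  shows "qs_map (u, y, z) \<in> {x - \<epsilon><..<x + \<epsilon>}"
proof -
  have "qs_map (u, y, z) - x = (1 - u) * (z - (x - u * y - qs_toll u) / (1 - u))"
    using assms(2) by (simp add: qs_map_def field_simps)
  also have "\<bar>\<dots>\<bar> \<le> \<bar>z - (x - u * y - qs_toll u) / (1 - u)\<bar>"
    using assms(1,2) by (simp add: abs_mult mult_left_le_one_le)
  finally have "\<bar>qs_map (u, y, z) - x\<bar> < \<epsilon>" using z by linarith
  then show ?thesis by (auto simp: abs_less_iff)
qed

text \<open>The centre (x - v w - g v) / (1 - v), with x = y + g u, is the z solving qs_map (v, w, z) = x.\<close>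
lemma qs_section_centre_near:
  assumes "0 < u" "u < 1" "0 < r"
  obtains \<eta> \<rho> where "0 < \<eta>" "\<eta> \<le> u" "\<eta> \<le> 1 - u" "0 < \<rho>"
    "\<And>v w. \<bar>v - u\<bar> < \<eta> \<Longrightarrow> \<bar>w - y\<bar> < \<rho> \<Longrightarrow>
       \<bar>(y + qs_toll u - v * w - qs_toll v) / (1 - v) - y\<bar> < r"
proof -
  define centre where "centre = (\<lambda>p::real \<times> real. (y + qs_toll u - fst p * snd p - qs_toll (fst p)) / (1 - fst p))"
  have "isCont centre (u, y)"
    unfolding centre_def qs_toll_def using assms by (intro continuous_intros) auto
  then have "(centre \<longlongrightarrow> centre (u, y)) (nhds (u, y))"
    by (simp only: isCont_def tendsto_at_iff_tendsto_nhds)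
  moreover have "centre (u, y) = y"
    unfolding centre_def using assms by (simp add: field_simps)
  ultimately have "\<forall>\<^sub>F p in nhds (u, y). dist (centre p) y < r"
    using assms(3) by (auto intro: tendstoD)
  then obtain Pu Py where "eventually Pu (nhds u)" "eventually Py (nhds y)"
    and P: "\<And>v w. Pu v \<Longrightarrow> Py w \<Longrightarrow> dist (centre (v, w)) y < r"
    unfolding nhds_prod eventually_prod_filter by blast
  then obtain \<eta> \<rho> where "0 < \<eta>" "\<And>v. dist v u < \<eta> \<Longrightarrow> Pu v" "0 < \<rho>" "\<And>w. dist w y < \<rho> \<Longrightarrow> Py w"
    unfolding eventually_nhds_metric by blast
  then show ?thesis
    using that[of "min \<eta> (min u (1 - u))" \<rho>] assms P by (auto simp: centre_def dist_real_def)
qed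

lemma quicksort_law_emeasure_interval_ge:
  fixes f :: "real \<Rightarrow> real"
  assumes ql: "quicksort_law \<mu>" and dens: "\<mu> = density lborel (\<lambda>x. ennreal (f x))"
    and f: "f \<in> borel_measurable borel"
    and U: "U \<in> sets borel" "U \<subseteq> {0..<1}" and Y: "Y \<in> sets borel"
    and \<epsilon>: "0 < \<epsilon>" and \<delta>: "0 \<le> \<delta>"
    and lower: "\<And>u y z. u \<in> U \<Longrightarrow> y \<in> Y \<Longrightarrow>
                  \<bar>z - (x - u * y - qs_toll u) / (1 - u)\<bar> < \<epsilon> \<Longrightarrow> \<delta> \<le> f z"
  shows "ennreal (2 * \<epsilon> * \<delta>) * emeasure \<mu> Y * emeasure unif01 U \<le> emeasure \<mu> {x - \<epsilon><..<x + \<epsilon>}"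
proof -
  define A where "A = qs_map -` {x - \<epsilon><..<x + \<epsilon>}"
  have A: "A \<in> sets (unif01 \<Otimes>\<^sub>M (\<mu> \<Otimes>\<^sub>M \<mu>))"
    using measurable_sets[OF quicksort_law_qs_map_measurable(1)[OF ql], of "{x - \<epsilon><..<x + \<epsilon>}"]
    by (simp add: A_def quicksort_law_qs_map_measurable(2)[OF ql])
  interpret \<mu>: prob_space \<mu> using quicksort_lawD(1)[OF ql] .
  interpret \<mu>\<mu>: sigma_finite_measure "\<mu> \<Otimes>\<^sub>M \<mu>"
    by (intro prob_space_imp_sigma_finite prob_space_pair quicksort_lawD(1)[OF ql])
  have "ennreal (2 * \<epsilon> * \<delta>) \<le> emeasure \<mu> (Pair y -` Pair u -` A)" if "u \<in> U" "y \<in> Y" for u y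
  proof -
    define z0 where "z0 = (x - u * y - qs_toll u) / (1 - u)"
    have interval_in_section: "{z0 - \<epsilon><..<z0 + \<epsilon>} \<subseteq> Pair y -` Pair u -` A"
    proof
      fix z assume "z \<in> {z0 - \<epsilon><..<z0 + \<epsilon>}"
      then have "\<bar>z - z0\<bar> < \<epsilon>" by (simp add: abs_less_iff)
      with that U(2) show "z \<in> Pair y -` Pair u -` A"
        unfolding A_def z0_def using qs_map_near[of u z x y \<epsilon>] by auto
    qed
    have "Pair y -` Pair u -` A \<in> sets borel"
      using sets_Pair1[OF sets_Pair1[OF A]] quicksort_lawD(2)[OF ql] by simp
    from emeasure_density_lborel_ge[OF f this interval_in_section]
    have "ennreal (\<delta> * ((z0 + \<epsilon>) - (z0 - \<epsilon>))) \<le> emeasure \<mu> (Pair y -` Pair u -` A)"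
      using \<epsilon> \<delta> lower[OF that] by (auto simp: dens z0_def abs_less_iff)
    then show ?thesis by (simp add: algebra_simps)
  qed
  then have "ennreal (2 * \<epsilon> * \<delta>) * emeasure \<mu> Y \<le> emeasure (\<mu> \<Otimes>\<^sub>M \<mu>) (Pair u -` A)" if "u \<in> U" for u
    using Y quicksort_lawD(2)[OF ql] that
    by (intro \<mu>.emeasure_pair_measure_ge sets_Pair1[OF A]) auto
  then have "ennreal (2 * \<epsilon> * \<delta>) * emeasure \<mu> Y * emeasure unif01 U \<le> emeasure (unif01 \<Otimes>\<^sub>M (\<mu> \<Otimes>\<^sub>M \<mu>)) A"
    using U by (intro \<mu>\<mu>.emeasure_pair_measure_ge A) (auto simp: unif01_def)
  then show ?thesis
    using quicksort_law_emeasure[OF ql] by (simp add: A_def)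
qed

lemma quicksort_law_emeasure_near_shift_ge:
  fixes f :: "real \<Rightarrow> real"
  assumes ql: "quicksort_law \<mu>" and dens: "\<mu> = density lborel (\<lambda>x. ennreal (f x))"
    and cont: "continuous_on UNIV f" and "0 < f y" "0 < u" "u < 1"
  obtains c r where "0 < c" "0 < r"
    "\<And>\<epsilon>. 0 < \<epsilon> \<Longrightarrow> \<epsilon> \<le> r \<Longrightarrow>
       ennreal (\<epsilon> * c) \<le> emeasure \<mu> {y + qs_toll u - \<epsilon><..<y + qs_toll u + \<epsilon>}"
proof -
  have f: "f \<in> borel_measurable borel" using cont by (rule borel_measurable_continuous_onI)
  define \<delta> where "\<delta> = f y / 2"
  have "0 < \<delta>" using assms(4) by (simp add: \<delta>_def)
  obtain r where "0 < r" and r: "\<And>z. \<bar>z - y\<bar> < r \<Longrightarrow> \<delta> \<le> f z"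
    using isCont_half_lower_bound[where f = f and y = y] cont assms(4)
    unfolding \<delta>_def by (auto simp: continuous_on_eq_continuous_at)
  obtain \<eta> \<rho> where "0 < \<eta>" "\<eta> \<le> u" "\<eta> \<le> 1 - u" "0 < \<rho>"
    and centre: "\<And>v w. \<bar>v - u\<bar> < \<eta> \<Longrightarrow> \<bar>w - y\<bar> < \<rho> \<Longrightarrow>
       \<bar>(y + qs_toll u - v * w - qs_toll v) / (1 - v) - y\<bar> < r / 2"
    using qs_section_centre_near[of u "r / 2" y] assms(5,6) \<open>0 < r\<close> by auto
  define \<rho>' where "\<rho>' = min \<rho> r"
  define c where "c = 2 * \<delta> * (\<delta> * (2 * \<rho>')) * (2 * \<eta>)"
  show ?thesis
  proof (rule that[of c "r / 2"])
    show "0 < c" "0 < r / 2"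
      using \<open>0 < \<delta>\<close> \<open>0 < \<eta>\<close> \<open>0 < \<rho>\<close> \<open>0 < r\<close> by (auto simp: c_def \<rho>'_def)
    fix \<epsilon> :: real assume "0 < \<epsilon>" "\<epsilon> \<le> r / 2"
    have Y: "ennreal (\<delta> * ((y + \<rho>') - (y - \<rho>'))) \<le> emeasure \<mu> {y - \<rho>'<..<y + \<rho>'}"
      unfolding dens using \<open>0 < \<delta>\<close> \<open>0 < \<rho>\<close> \<open>0 < r\<close>
      by (intro emeasure_density_lborel_ge[OF f] r) (auto simp: \<rho>'_def abs_less_iff)
    have U: "emeasure unif01 {u - \<eta><..<u + \<eta>} = ennreal ((u + \<eta>) - (u - \<eta>))"
      using \<open>0 < \<eta>\<close> \<open>\<eta> \<le> u\<close> \<open>\<eta> \<le> 1 - u\<close> by (intro emeasure_unif01_interval) auto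
    have "ennreal (\<epsilon> * c)
        = ennreal (2 * \<epsilon> * \<delta>) * ennreal (\<delta> * ((y + \<rho>') - (y - \<rho>'))) * ennreal ((u + \<eta>) - (u - \<eta>))"
      using \<open>0 < \<epsilon>\<close> \<open>0 < \<delta>\<close> \<open>0 < \<eta>\<close> \<open>0 < \<rho>\<close> \<open>0 < r\<close>
      by (simp add: c_def \<rho>'_def ennreal_mult[symmetric] mult_ac)
    also have "\<dots> \<le> ennreal (2 * \<epsilon> * \<delta>) * emeasure \<mu> {y - \<rho>'<..<y + \<rho>'} * emeasure unif01 {u - \<eta><..<u + \<eta>}"
      using Y U by (intro mult_mono) auto
    also have "\<dots> \<le> emeasure \<mu> {y + qs_toll u - \<epsilon><..<y + qs_toll u + \<epsilon>}"
    proof (rule quicksort_law_emeasure_interval_ge[OF ql dens f])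
      fix v w z assume "v \<in> {u - \<eta><..<u + \<eta>}" "w \<in> {y - \<rho>'<..<y + \<rho>'}"
        and z: "\<bar>z - (y + qs_toll u - v * w - qs_toll v) / (1 - v)\<bar> < \<epsilon>"
      define m where "m = (y + qs_toll u - v * w - qs_toll v) / (1 - v)"
      have "\<bar>m - y\<bar> < r / 2"
        unfolding m_def using \<open>v \<in> _\<close> \<open>w \<in> _\<close> by (intro centre) (auto simp: \<rho>'_def abs_less_iff)
      with z[folded m_def] \<open>\<epsilon> \<le> r / 2\<close> show "\<delta> \<le> f z"
        by (intro r) linarith
    qed (use \<open>0 < \<epsilon>\<close> \<open>0 < \<delta>\<close> \<open>\<eta> \<le> u\<close> \<open>\<eta> \<le> 1 - u\<close> in auto)
    finally show "ennreal (\<epsilon> * c) \<le> emeasure \<mu> {y + qs_toll u - \<epsilon><..<y + qs_toll u + \<epsilon>}" .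
  qed
qed

lemma quicksort_density_pos_shift:
  fixes f :: "real \<Rightarrow> real"
  assumes ql: "quicksort_law \<mu>" and cont: "continuous_on UNIV f"
    and dens: "\<mu> = density lborel (\<lambda>x. ennreal (f x))"
    and "0 < f y" "0 < u" "u < 1"
  shows "0 < f (y + qs_toll u)"
proof (rule ccontr)
  define x where "x = y + qs_toll u"
  assume "\<not> 0 < f (y + qs_toll u)"
  then have "f x \<le> 0" by (simp add: x_def)
  obtain c r where "0 < c" "0 < r"
    and lower: "\<And>\<epsilon>. 0 < \<epsilon> \<Longrightarrow> \<epsilon> \<le> r \<Longrightarrow> ennreal (\<epsilon> * c) \<le> emeasure \<mu> {x - \<epsilon><..<x + \<epsilon>}"
    using quicksort_law_emeasure_near_shift_ge[OF ql dens cont assms(4-6)] unfolding x_def by blast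
  obtain d where "0 < d"
    and upper: "\<And>\<epsilon>. 0 < \<epsilon> \<Longrightarrow> \<epsilon> \<le> d \<Longrightarrow> emeasure \<mu> {x - \<epsilon><..<x + \<epsilon>} \<le> ennreal (\<epsilon> * (c / 2))"
    using emeasure_density_lborel_near_zero[OF borel_measurable_continuous_onI[OF cont] _ \<open>f x \<le> 0\<close>, of "c / 2"]
      cont \<open>0 < c\<close> unfolding dens by (auto simp: continuous_on_eq_continuous_at)
  define \<epsilon> where "\<epsilon> = min r d"
  have "0 < \<epsilon>" using \<open>0 < r\<close> \<open>0 < d\<close> by (simp add: \<epsilon>_def)
  have "ennreal (\<epsilon> * c) \<le> ennreal (\<epsilon> * (c / 2))"
    using lower[of \<epsilon>] upper[of \<epsilon>] \<open>0 < \<epsilon>\<close> by (force simp: \<epsilon>_def)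
  then show False
    using \<open>0 < \<epsilon>\<close> \<open>0 < c\<close> by (simp add: field_simps)
qed

theorem corollary4p2:
  fixes \<mu> :: "real measure" and f :: "real \<Rightarrow> real"
  assumes "quicksort_law \<mu>"
    and "continuous_on UNIV f"
    and "\<And>x. f x \<ge> 0"
    and "\<mu> = density lborel (\<lambda>x. ennreal (f x))"
  shows "\<forall>x. f x > 0"
proof
  fix x
  obtain y where "0 < f y"
    using prob_space_density_lborel_pos quicksort_lawD(1)[OF assms(1)] assms(4) by metis
  obtain m where "0 < m" and covers: "\<And>s. \<bar>s\<bar> \<le> m \<Longrightarrow> \<exists>u. 0 < u \<and> u < 1 \<and> qs_toll u = s"
    using qs_toll_covers_zero_neighbourhood by blast
  show "0 < f x"
  proof (rule real_reachable_by_bounded_steps[where P = "\<lambda>x. 0 < f x", OF \<open>0 < m\<close> \<open>0 < f y\<close>])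
    fix y s assume "0 < f y" "\<bar>s\<bar> \<le> m"
    then show "0 < f (y + s)"
      using covers quicksort_density_pos_shift[OF assms(1,2,4)] by blast
  qed
qed

end
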